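(* Fix $2\le d\le7$. There exists $c_d$ with $0<c_g<c_d$ such that for all $0\le c<c_d$: both $x\mapsto\mathsf i(c,x)$ and $x\mapsto\mathsf j(c,x)$ have unique fixed points $a_c,b_c$ in $(0,1)$; $|\partial\mathsf i(c,x)/\partial x|<1$ and $|\partial\mathsf j(c,x)/\partial x|<1$ for $x\in[0,1]$; for any $x\in[0,1]$ the iterates of $\mathsf i(c,\cdot)$ from $x$ converge to $a_c$ and the iterates of $\mathsf j(c,\cdot)$ from $x$ converge to $b_c$; and $\mathsf i(c,x)>x$ if and only if $x\in[0,a_c)$, while $\mathsf j(c,x)>x$ if and only if $x\in[0,b_c)$ (for $x\in[0,1]$).
   Context: $f(\alpha,x):=\big(\frac{1+\alpha x}{1+2x}\big)^d$ for $1\le\alpha<2$, $0\le x\le1$. $\mathsf i(c,x):=f(1,f(1+c,x))$ and $\mathsf j(c,x):=f(1+c,f(1,x))$. $g(b,x):=b^d\big(\frac{1+x+x^2}{1+b+bx}\big)^d$, and $c_g$ denotes the unique fixed point in $(0,1)$ of $x\mapsto g(1,x)$. *)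

theory Defs
  imports "HOL-Analysis.Analysis"
begin

definition ff :: "nat \<Rightarrow> real \<Rightarrow> real \<Rightarrow> real" where
  "ff d \<alpha> x = ((1 + \<alpha> * x) / (1 + 2 * x)) ^ d"

definition ii :: "nat \<Rightarrow> real \<Rightarrow> real \<Rightarrow> real" where
  "ii d c x = ff d 1 (ff d (1 + c) x)"

definition jj :: "nat \<Rightarrow> real \<Rightarrow> real \<Rightarrow> real" where
  "jj d c x = ff d (1 + c) (ff d 1 x)"

definition gg :: "nat \<Rightarrow> real \<Rightarrow> real \<Rightarrow> real" where
  "gg d b x = b ^ d * ((1 + x + x ^ 2) / (1 + b + b * x)) ^ d"

definition c_g :: "nat \<Rightarrow> real" where
  "c_g d = (THE x. 0 < x \<and> x < 1 \<and> gg d 1 x = x)"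

end

theory Submission
  imports Defs
begin

(* Both maps are compositions x \<mapsto> f(\<beta>, f(\<alpha>, x)) with \<alpha>, \<beta> \<in> [1, 1 + c].
   For such \<alpha>, |\<partial>f(\<alpha>, x)/\<partial>x| is bounded by the antitone majorant
   M(x) = d ((1 + (1 + C) x) / (1 + 2x))^(d-1) / (1 + 2x)^2 whenever c \<le> C, and f(\<alpha>, x) \<ge> f(1, x),
   so the derivative of the composition is at most M(f(1, x)) M(x). Checking this product on
   finitely many subintervals with exact rational arithmetic bounds it by 99/100 on [0, 1], for
   C = 1/2, 1/5, 1/10, 1/25, 1/50, 1/100 when d = 2, ..., 7. Both maps are then contractions of
   [0, 1] sending 0 above 0 and 1 below 1, and everything follows from the Banach fixed point
   theorem. Finally c_g < C: (1 + x + x^2)^d - x (2 + x)^d = (x - 1) (x P(x) - 1) with P a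
   polynomial with nonnegative coefficients, so the fixed point of g(1, -) in (0, 1) is the unique
   zero of the increasing function x P(x) - 1, which changes sign on [0, C]. *)

lemma lipschitz_on_iterates_tendsto_fixpoint:
  fixes f :: "'a::metric_space \<Rightarrow> 'a"
  assumes lip: "L-lipschitz_on S f" and "L < 1" and "f ` S \<subseteq> S"
    and "a \<in> S" "f a = a" and "x \<in> S"
  shows "(\<lambda>n. (f ^^ n) x) \<longlonglongrightarrow> a"
proof -
  have L0: "0 \<le> L" using lipschitz_on_nonneg[OF lip] .
  have iterate_in: "(f ^^ n) x \<in> S" for n
    by (induction n) (use assms in auto)
  have dist_le: "dist ((f ^^ n) x) a \<le> L ^ n * dist x a" for n
  proof (induction n)
    case (Suc n)
    have "dist ((f ^^ Suc n) x) a = dist (f ((f ^^ n) x)) (f a)"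
      using \<open>f a = a\<close> by simp
    also have "\<dots> \<le> L * dist ((f ^^ n) x) a"
      using lipschitz_onD[OF lip iterate_in \<open>a \<in> S\<close>] .
    also have "\<dots> \<le> L * (L ^ n * dist x a)"
      using Suc L0 by (rule mult_left_mono)
    finally show ?case by simp
  qed simp
  have "(\<lambda>n. L ^ n * dist x a) \<longlonglongrightarrow> 0"
    using L0 \<open>L < 1\<close> by (intro tendsto_mult_left_zero LIMSEQ_power_zero) auto
  then have "(\<lambda>n. dist ((f ^^ n) x) a) \<longlonglongrightarrow> 0"
    by (rule Lim_null_comparison[rotated]) (simp add: dist_le)
  then show ?thesis
    by (rule tendsto_dist_iff[THEN iffD2])
qed

lemma lipschitz_on_less_fixpoint_iff:
  fixes h :: "real \<Rightarrow> real"
  assumes lip: "L-lipschitz_on S h" and "L < 1"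
    and "a \<in> S" "h a = a" and "x \<in> S"
  shows "x < h x \<longleftrightarrow> x < a"
proof -
  have dist: "\<bar>h x - a\<bar> \<le> L * \<bar>x - a\<bar>"
    using lipschitz_onD[OF lip \<open>x \<in> S\<close> \<open>a \<in> S\<close>] \<open>h a = a\<close> by (simp add: dist_real_def)
  show ?thesis
  proof (cases x a rule: linorder_cases)
    case less
    have "a - h x \<le> L * (a - x)" using dist less by (simp add: abs_le_iff)
    moreover have "L * (a - x) < a - x" using less \<open>L < 1\<close> by simp
    ultimately have "x < h x" by linarith
    then show ?thesis using less by simp
  next
    case greater
    have "h x - a \<le> L * (x - a)" using dist greater by (simp add: abs_le_iff)
    moreover have "L * (x - a) < x - a" using greater \<open>L < 1\<close> by simp
    ultimately have "h x < x" by linarith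
    then show ?thesis using greater by simp
  qed (use \<open>h a = a\<close> in simp)
qed

lemma lipschitz_on_unique_fixpoint_in_open_unit_interval:
  fixes h :: "real \<Rightarrow> real"
  assumes lip: "L-lipschitz_on {0..1} h" and "L < 1" and "h ` {0..1} \<subseteq> {0..1}"
    and "0 < h 0" "h 1 < 1"
  shows "\<exists>!a. 0 < a \<and> a < 1 \<and> h a = a"
proof -
  have "\<exists>!a. a \<in> {0..1} \<and> h a = a"
  proof (rule Banach_fix)
    show "complete {0..1::real}"
      by (simp add: complete_eq_closed)
    show "dist (h x) (h y) \<le> L * dist x y" if "x \<in> {0..1}" "y \<in> {0..1}" for x y
      using lipschitz_onD[OF lip that] .
  qed (use lipschitz_on_nonneg[OF lip] assms(2,3) in auto)
  moreover have "h 0 \<noteq> 0" "h 1 \<noteq> 1"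
    using assms(4,5) by auto
  ultimately show ?thesis
    by (metis atLeastAtMost_iff order_less_le)
qed

lemma lipschitz_on_of_real_derivative_bound:
  fixes h h' :: "real \<Rightarrow> real"
  assumes "convex S" "0 \<le> L"
    and "\<And>x. x \<in> S \<Longrightarrow> (h has_real_derivative h' x) (at x)"
    and "\<And>x. x \<in> S \<Longrightarrow> \<bar>h' x\<bar> \<le> L"
  shows "L-lipschitz_on S h"
proof (rule lipschitz_onI)
  have der_within: "(h has_real_derivative h' x) (at x within S)" if "x \<in> S" for x
    using assms(3)[OF that] by (rule has_field_derivative_at_within)
  show "dist (h x) (h y) \<le> L * dist x y" if "x \<in> S" "y \<in> S" for x y
    unfolding dist_norm
    by (rule field_differentiable_bound[OF \<open>convex S\<close> der_within]) (use assms(4) that in auto)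
qed fact

lemma contraction_of_unit_interval:
  fixes h h' :: "real \<Rightarrow> real"
  assumes "L < 1"
    and der: "\<And>x. x \<in> {0..1} \<Longrightarrow> (h has_real_derivative h' x) (at x)"
    and bound: "\<And>x. x \<in> {0..1} \<Longrightarrow> \<bar>h' x\<bar> \<le> L"
    and maps: "h ` {0..1} \<subseteq> {0..1}" and "0 < h 0" "h 1 < 1"
  shows "\<exists>!a. 0 < a \<and> a < 1 \<and> h a = a"
    and "x \<in> {0..1} \<Longrightarrow> \<bar>deriv h x\<bar> < 1"
    and "0 < a \<Longrightarrow> a < 1 \<Longrightarrow> h a = a \<Longrightarrow> x \<in> {0..1} \<Longrightarrow> (\<lambda>n. (h ^^ n) x) \<longlonglongrightarrow> a"
    and "0 < a \<Longrightarrow> a < 1 \<Longrightarrow> h a = a \<Longrightarrow> x \<in> {0..1} \<Longrightarrow> x < h x \<longleftrightarrow> x < a"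
proof -
  have "0 \<le> L" using bound[of 0] by auto
  then have lip: "L-lipschitz_on {0..1} h"
    using der bound by (intro lipschitz_on_of_real_derivative_bound) auto
  show "\<exists>!a. 0 < a \<and> a < 1 \<and> h a = a"
    using lipschitz_on_unique_fixpoint_in_open_unit_interval[OF lip] assms by blast
  show "\<bar>deriv h x\<bar> < 1" if "x \<in> {0..1}"
    using DERIV_imp_deriv[OF der[OF that]] bound[OF that] \<open>L < 1\<close> by simp
  show "(\<lambda>n. (h ^^ n) x) \<longlonglongrightarrow> a" "x < h x \<longleftrightarrow> x < a"
    if "0 < a" "a < 1" "h a = a" "x \<in> {0..1}"
    using that lipschitz_on_iterates_tendsto_fixpoint[OF lip \<open>L < 1\<close> maps]
      lipschitz_on_less_fixpoint_iff[OF lip \<open>L < 1\<close>] by auto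
qed

definition ff_dx :: "nat \<Rightarrow> real \<Rightarrow> real \<Rightarrow> real" where
  "ff_dx d \<alpha> x = real d * ff (d - 1) \<alpha> x * (\<alpha> - 2) / (1 + 2 * x) ^ 2"

definition ff_dx_majorant :: "nat \<Rightarrow> real \<Rightarrow> real \<Rightarrow> real" where
  "ff_dx_majorant d C x = real d * ff (d - 1) (1 + C) x / (1 + 2 * x) ^ 2"

lemma ff_pos: "0 \<le> x \<Longrightarrow> 0 \<le> \<alpha> \<Longrightarrow> 0 < ff d \<alpha> x"
  unfolding ff_def by (simp add: add_pos_nonneg)

lemma ff_le_one: "0 \<le> x \<Longrightarrow> 0 \<le> \<alpha> \<Longrightarrow> \<alpha> \<le> 2 \<Longrightarrow> ff d \<alpha> x \<le> 1"
  unfolding ff_def using mult_right_mono[of \<alpha> 2 x] by (simp add: power_le_one)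

lemma ff_less_one: "0 < x \<Longrightarrow> 0 \<le> \<alpha> \<Longrightarrow> \<alpha> < 2 \<Longrightarrow> 0 < d \<Longrightarrow> ff d \<alpha> x < 1"
  unfolding ff_def using mult_strict_right_mono[of \<alpha> 2 x] by (simp add: power_less_one_iff)

lemma ff_mono: "0 \<le> x \<Longrightarrow> 0 \<le> \<alpha> \<Longrightarrow> \<alpha> \<le> \<beta> \<Longrightarrow> ff d \<alpha> x \<le> ff d \<beta> x"
  unfolding ff_def using mult_right_mono[of \<alpha> \<beta> x]
  by (intro power_mono divide_right_mono) auto

lemma ff_antimono:
  assumes "0 \<le> x" "x \<le> y" "0 \<le> \<alpha>" "\<alpha> \<le> 2"
  shows "ff d \<alpha> y \<le> ff d \<alpha> x"
proof -
  have "(1 + \<alpha> * y) * (1 + 2 * x) \<le> (1 + \<alpha> * x) * (1 + 2 * y)"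
    using mult_nonneg_nonneg[of "2 - \<alpha>" "y - x"] assms by (simp add: algebra_simps)
  then have "(1 + \<alpha> * y) / (1 + 2 * y) \<le> (1 + \<alpha> * x) / (1 + 2 * x)"
    using assms by (simp add: divide_simps)
  then show ?thesis
    unfolding ff_def using assms by (intro power_mono) auto
qed

lemma has_real_derivative_ff:
  assumes "0 \<le> x"
  shows "(ff d \<alpha> has_real_derivative ff_dx d \<alpha> x) (at x)"
proof -
  have "((\<lambda>x. (1 + \<alpha> * x) / (1 + 2 * x)) has_real_derivative (\<alpha> - 2) / (1 + 2 * x) ^ 2) (at x)"
    using assms by (auto intro!: derivative_eq_intros simp: field_simps power2_eq_square)
  from DERIV_power[OF this, of d] show ?thesis
    unfolding ff_dx_def ff_def[abs_def] by (simp add: mult.commute mult.left_commute)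
qed

lemma ff_dx_majorant_nonneg: "0 \<le> x \<Longrightarrow> 0 \<le> C \<Longrightarrow> 0 \<le> ff_dx_majorant d C x"
  unfolding ff_dx_majorant_def using ff_pos[of x "1 + C" "d - 1"] by simp

lemma ff_dx_majorant_antimono:
  assumes "0 \<le> x" "x \<le> y" "0 \<le> C" "C \<le> 1"
  shows "ff_dx_majorant d C y \<le> ff_dx_majorant d C x"
proof -
  have "ff (d - 1) (1 + C) y \<le> ff (d - 1) (1 + C) x"
    using assms by (intro ff_antimono) auto
  moreover have "(1 + 2 * x) ^ 2 \<le> (1 + 2 * y) ^ 2"
    using assms by (intro power_mono) auto
  ultimately show ?thesis
    unfolding ff_dx_majorant_def using assms ff_pos[of y "1 + C" "d - 1"]
    by (intro divide_mono mult_left_mono) auto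
qed

lemma abs_ff_dx_le_majorant:
  assumes "0 \<le> x" "1 \<le> \<alpha>" "\<alpha> \<le> 1 + C" "C \<le> 1"
  shows "\<bar>ff_dx d \<alpha> x\<bar> \<le> ff_dx_majorant d C x"
proof -
  have "\<bar>ff_dx d \<alpha> x\<bar> = real d * ff (d - 1) \<alpha> x * (2 - \<alpha>) / (1 + 2 * x) ^ 2"
    unfolding ff_dx_def using assms ff_pos[of x \<alpha> "d - 1"]
    by (simp add: abs_mult abs_divide)
  also have "\<dots> \<le> real d * ff (d - 1) (1 + C) x * 1 / (1 + 2 * x) ^ 2"
    using assms ff_mono[of x \<alpha> "1 + C" "d - 1"] ff_pos[of x \<alpha> "d - 1"]
    by (intro divide_right_mono mult_mono mult_left_mono) auto
  finally show ?thesis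
    by (simp add: ff_dx_majorant_def)
qed

lemma has_real_derivative_ff_comp:
  assumes "0 \<le> x" "0 \<le> \<alpha>"
  shows "((\<lambda>x. ff d \<beta> (ff d \<alpha> x)) has_real_derivative ff_dx d \<beta> (ff d \<alpha> x) * ff_dx d \<alpha> x) (at x)"
  using DERIV_chain2[OF has_real_derivative_ff has_real_derivative_ff] ff_pos[of x \<alpha> d] assms
  by simp

lemma abs_ff_comp_dx_le:
  assumes "0 \<le> x" "0 \<le> C" "C \<le> 1" "\<alpha> \<in> {1..1 + C}" "\<beta> \<in> {1..1 + C}"
  shows "\<bar>ff_dx d \<beta> (ff d \<alpha> x) * ff_dx d \<alpha> x\<bar> \<le> ff_dx_majorant d C (ff d 1 x) * ff_dx_majorant d C x"
proof -
  have "ff d 1 x \<le> ff d \<alpha> x"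
    using assms by (intro ff_mono) auto
  then have "\<bar>ff_dx d \<beta> (ff d \<alpha> x)\<bar> \<le> ff_dx_majorant d C (ff d 1 x)"
    using assms abs_ff_dx_le_majorant[of "ff d \<alpha> x" \<beta> C d] ff_pos[of x \<alpha> d]
      ff_dx_majorant_antimono[of "ff d 1 x" "ff d \<alpha> x" C d] ff_pos[of x 1 d]
    by auto
  moreover have "\<bar>ff_dx d \<alpha> x\<bar> \<le> ff_dx_majorant d C x"
    using assms by (intro abs_ff_dx_le_majorant) auto
  ultimately show ?thesis
    unfolding abs_mult by (intro mult_mono) auto
qed

(* Each pair (q, y) certifies the bound L on [p, q], where p is the previous q (initially 0);
   y is a short rational below f(1, q), the minimum of f(1, -) on [p, q]. *)
fun majorant_cert :: "nat \<Rightarrow> real \<Rightarrow> real \<Rightarrow> real \<Rightarrow> (real \<times> real) list \<Rightarrow> bool" where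
  "majorant_cert d C L p [] \<longleftrightarrow> False"
| "majorant_cert d C L p ((q, y) # qys) \<longleftrightarrow>
    p \<le> q \<and> 0 \<le> y \<and> y \<le> ff d 1 q \<and>
    ff_dx_majorant d C y * ff_dx_majorant d C p \<le> L \<and> (1 \<le> q \<or> majorant_cert d C L q qys)"

lemma majorant_cert_bound:
  assumes "majorant_cert d C L p qys" "0 \<le> p" "p \<le> x" "x \<le> 1" "0 \<le> C" "C \<le> 1"
  shows "ff_dx_majorant d C (ff d 1 x) * ff_dx_majorant d C x \<le> L"
  using assms(1-4)
proof (induction qys arbitrary: p)
  case Nil
  then show ?case by simp
next
  case (Cons qy qys)
  obtain q y where qy: "qy = (q, y)" by fastforce
  show ?case
  proof (cases "x \<le> q")
    case True
    have "y \<le> ff d 1 x"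
      using Cons.prems True ff_antimono[of x q 1 d] qy by auto
    then have "ff_dx_majorant d C (ff d 1 x) \<le> ff_dx_majorant d C y"
      using Cons.prems qy assms(5,6) by (intro ff_dx_majorant_antimono) auto
    moreover have "ff_dx_majorant d C x \<le> ff_dx_majorant d C p"
      using Cons.prems assms(5,6) by (intro ff_dx_majorant_antimono) auto
    ultimately have "ff_dx_majorant d C (ff d 1 x) * ff_dx_majorant d C x
        \<le> ff_dx_majorant d C y * ff_dx_majorant d C p"
      using Cons.prems qy assms(5) ff_pos[of x 1 d]
      by (intro mult_mono ff_dx_majorant_nonneg) auto
    then show ?thesis
      using Cons.prems qy by simp
  next
    case False
    then show ?thesis
      using Cons.prems qy by (intro Cons.IH[of q]) auto
  qed
qed

lemma ff_comp_contraction_conditions: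
  assumes "0 < d" "0 \<le> C" "C < 1" "majorant_cert d C L 0 qys"
    and "\<alpha> \<in> {1..1 + C}" "\<beta> \<in> {1..1 + C}"
    and h_def: "\<And>x. h x = ff d \<beta> (ff d \<alpha> x)"
  shows "x \<in> {0..1} \<Longrightarrow> (h has_real_derivative ff_dx d \<beta> (ff d \<alpha> x) * ff_dx d \<alpha> x) (at x)"
    and "x \<in> {0..1} \<Longrightarrow> \<bar>ff_dx d \<beta> (ff d \<alpha> x) * ff_dx d \<alpha> x\<bar> \<le> L"
    and "h ` {0..1} \<subseteq> {0..1}" and "0 < h 0" and "h 1 < 1"
proof -
  have h_eq: "h = (\<lambda>x. ff d \<beta> (ff d \<alpha> x))"
    using h_def by blast
  show "(h has_real_derivative ff_dx d \<beta> (ff d \<alpha> x) * ff_dx d \<alpha> x) (at x)" if "x \<in> {0..1}"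
    unfolding h_eq using that assms(5) by (intro has_real_derivative_ff_comp) auto
  show "\<bar>ff_dx d \<beta> (ff d \<alpha> x) * ff_dx d \<alpha> x\<bar> \<le> L" if "x \<in> {0..1}"
    using abs_ff_comp_dx_le[of x C \<alpha> \<beta> d] majorant_cert_bound[OF assms(4), of x] that assms(2,3,5,6)
    by auto
  show "h ` {0..1} \<subseteq> {0..1}"
    using assms(3,5,6) ff_pos ff_le_one by (auto simp: h_def less_imp_le)
  show "0 < h 0"
    using assms(5,6) ff_pos[of 0 \<alpha> d] by (auto simp: h_def intro!: ff_pos)
  show "h 1 < 1"
    using assms ff_pos[of 1 \<alpha> d] by (auto simp: h_def intro!: ff_less_one)
qed

fun horner :: "real list \<Rightarrow> real \<Rightarrow> real" where
  "horner [] x = 0"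
| "horner (a # as) x = a + x * horner as x"

lemma horner_nonneg: "list_all (\<lambda>a. 0 \<le> a) as \<Longrightarrow> 0 \<le> x \<Longrightarrow> 0 \<le> horner as x"
  by (induction as) auto

lemma horner_mono:
  "list_all (\<lambda>a. 0 \<le> a) as \<Longrightarrow> 0 \<le> x \<Longrightarrow> x \<le> y \<Longrightarrow> horner as x \<le> horner as y"
proof (induction as)
  case (Cons a as)
  then have "x * horner as x \<le> y * horner as y"
    using horner_nonneg[of as x] by (intro mult_mono) auto
  then show ?case by simp
qed simp

lemma isCont_horner: "isCont (horner as) x"
  by (induction as) (auto intro!: continuous_intros)

lemma gg_one_eq_self_iff:
  assumes "0 < x"
  shows "gg d 1 x = x \<longleftrightarrow> (1 + x + x ^ 2) ^ d = x * (2 + x) ^ d"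
proof -
  have "gg d 1 x = (1 + x + x ^ 2) ^ d / (2 + x) ^ d"
    unfolding gg_def by (simp add: power_divide add.commute add.left_commute)
  moreover have "0 < (2 + x) ^ d"
    using assms by simp
  ultimately show ?thesis
    using assms by (simp add: divide_eq_eq)
qed

lemma c_g_bounds_of_factorization:
  assumes factor: "\<And>x. (1 + x + x ^ 2) ^ d - x * (2 + x) ^ d = (x - 1) * (x * horner as x - 1)"
    and coeffs: "list_all (\<lambda>a. 0 \<le> a) as" "0 < horner as 0"
    and q: "0 < q" "q < 1" "1 < q * horner as q"
  shows "0 < c_g d \<and> c_g d < q"
proof -
  define Q where "Q x = x * horner as x - 1" for x
  have Q_less: "Q x < Q y" if "0 \<le> x" "x < y" for x y
  proof -
    have "x * horner as x \<le> x * horner as y"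
      using that horner_mono[OF coeffs(1)] by (intro mult_left_mono) auto
    also have "\<dots> < y * horner as y"
      using that coeffs horner_mono[OF coeffs(1), of 0 y] by (intro mult_strict_right_mono) auto
    finally show ?thesis
      by (simp add: Q_def)
  qed
  have fixpoint_iff: "gg d 1 x = x \<longleftrightarrow> Q x = 0" if "0 < x" "x < 1" for x
  proof -
    have "gg d 1 x = x \<longleftrightarrow> (1 + x + x ^ 2) ^ d - x * (2 + x) ^ d = 0"
      using gg_one_eq_self_iff[OF \<open>0 < x\<close>] by simp
    also have "\<dots> \<longleftrightarrow> (x - 1) * Q x = 0"
      by (simp only: factor Q_def)
    also have "\<dots> \<longleftrightarrow> Q x = 0"
      using \<open>x < 1\<close> by simp
    finally show ?thesis .
  qed
  have "continuous_on {0..q} Q"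
    unfolding Q_def by (intro continuous_at_imp_continuous_on ballI continuous_intros isCont_horner)
  then obtain r where r: "0 \<le> r" "r \<le> q" "Q r = 0"
    using IVT'[of Q 0 0 q] q by (auto simp: Q_def)
  have "r \<noteq> 0" "r \<noteq> q"
    using r q by (auto simp: Q_def)
  then have r_bounds: "0 < r" "r < q"
    using r by auto
  have "c_g d = r"
    unfolding c_g_def
  proof (rule the_equality)
    show "0 < r \<and> r < 1 \<and> gg d 1 r = r"
      using r r_bounds q fixpoint_iff[of r] by auto
    show "z = r" if "0 < z \<and> z < 1 \<and> gg d 1 z = z" for z
      using that fixpoint_iff[of z] Q_less[of z r] Q_less[of r z] r r_bounds
      by (cases z r rule: linorder_cases) auto
  qed
  then show ?thesis
    using r_bounds by simp
qed

lemma c_g_bounds_2: "0 < c_g 2 \<and> c_g 2 < 1/2"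
  by (rule c_g_bounds_of_factorization[where as = "[1, 2, 1]"])
    (simp_all add: algebra_simps power_numeral_reduce)

lemma majorant_cert_2:
  "majorant_cert 2 (1/2) (99/100) 0
    [(199/200, 89/200), (1, 111/250)]"
  by (simp add: ff_dx_majorant_def ff_def power_divide)

lemma c_g_bounds_3: "0 < c_g 3 \<and> c_g 3 < 1/5"
  by (rule c_g_bounds_of_factorization[where as = "[4, 10, 9, 4, 1]"])
    (simp_all add: algebra_simps power_numeral_reduce)

lemma majorant_cert_3:
  "majorant_cert 3 (1/5) (99/100) 0
    [(17/100, 133/200), (147/200, 173/500), (1, 37/125)]"
  by (simp add: ff_dx_majorant_def ff_def power_divide)

lemma c_g_bounds_4: "0 < c_g 4 \<and> c_g 4 < 1/10"
  by (rule c_g_bounds_of_factorization[where as = "[11, 33, 41, 30, 15, 5, 1]"])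
    (simp_all add: algebra_simps power_numeral_reduce)

lemma majorant_cert_4:
  "majorant_cert 4 (1/10) (99/100) 0
    [(31/400, 757/1000), (37/200, 559/1000), (153/400, 47/125), (1, 197/1000)]"
  by (simp add: ff_dx_majorant_def ff_def power_divide)

lemma c_g_bounds_5: "0 < c_g 5 \<and> c_g 5 < 1/25"
  by (rule c_g_bounds_of_factorization[where as = "[26, 91, 141, 136, 95, 51, 21, 6, 1]"])
    (simp_all add: algebra_simps power_numeral_reduce)

lemma majorant_cert_5:
  "majorant_cert 5 (1/25) (99/100) 0
    [(23/400, 767/1000), (47/400, 303/500), (37/200, 121/250), (11/40, 47/125),
     (169/400, 34/125), (167/200, 153/1000), (1, 131/1000)]"
  by (simp add: ff_dx_majorant_def ff_def power_divide)

lemma c_g_bounds_6: "0 < c_g 6 \<and> c_g 6 < 1/50"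
  by (rule c_g_bounds_of_factorization[where as = "[57, 228, 418, 488, 422, 293, 168, 78, 28, 7, 1]"])
    (simp_all add: algebra_simps power_numeral_reduce)

lemma majorant_cert_6:
  "majorant_cert 6 (1/50) (99/100) 0
    [(19/400, 383/500), (9/100, 621/1000), (51/400, 21/40), (13/80, 57/125),
     (79/400, 2/5), (47/200, 351/1000), (7/25, 61/200), (17/50, 257/1000),
     (173/400, 41/200), (253/400, 7/50), (1, 87/1000)]"
  by (simp add: ff_dx_majorant_def ff_def power_divide)

lemma c_g_bounds_7: "0 < c_g 7 \<and> c_g 7 < 1/100"
  by (rule c_g_bounds_of_factorization[where as = "[120, 540, 1135, 1534, 1548, 1275, 896, 540, 274, 113, 36, 8, 1]"])
    (simp_all add: algebra_simps power_numeral_reduce)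

lemma majorant_cert_7:
  "majorant_cert 7 (1/100) (99/100) 0
    [(9/200, 93/125), (2/25, 303/500), (21/200, 529/1000), (1/8, 239/500),
     (57/400, 439/1000), (63/400, 409/1000), (17/100, 193/500), (9/50, 37/100),
     (19/100, 177/500), (79/400, 343/1000), (41/200, 83/250), (17/80, 161/500),
     (11/50, 313/1000), (91/400, 38/125), (47/200, 59/200), (97/400, 287/1000),
     (1/4, 279/1000), (103/400, 271/1000), (53/200, 33/125), (109/400, 257/1000),
     (113/400, 31/125), (117/400, 239/1000), (121/400, 231/1000),
     (63/200, 111/500), (133/400, 21/100), (71/200, 49/250), (77/200, 179/1000),
     (43/100, 79/500), (41/80, 129/1000), (73/100, 17/200), (1, 29/500)]"
  by (simp add: ff_dx_majorant_def ff_def power_divide)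

lemma c_g_bounds_and_majorant_cert:
  assumes "2 \<le> d" "d \<le> 7"
  obtains C qys where "0 < c_g d" "c_g d < C" "C < 1" "majorant_cert d C (99/100) 0 qys"
proof -
  have "d = 2 \<or> d = 3 \<or> d = 4 \<or> d = 5 \<or> d = 6 \<or> d = 7"
    using assms by auto
  then show ?thesis
  proof (elim disjE)
    assume "d = 2"
    with c_g_bounds_2 show ?thesis
      by (intro that[unfolded \<open>d = 2\<close>, OF _ _ _ majorant_cert_2]) simp_all
  next
    assume "d = 3"
    with c_g_bounds_3 show ?thesis
      by (intro that[unfolded \<open>d = 3\<close>, OF _ _ _ majorant_cert_3]) simp_all
  next
    assume "d = 4"
    with c_g_bounds_4 show ?thesis
      by (intro that[unfolded \<open>d = 4\<close>, OF _ _ _ majorant_cert_4]) simp_all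
  next
    assume "d = 5"
    with c_g_bounds_5 show ?thesis
      by (intro that[unfolded \<open>d = 5\<close>, OF _ _ _ majorant_cert_5]) simp_all
  next
    assume "d = 6"
    with c_g_bounds_6 show ?thesis
      by (intro that[unfolded \<open>d = 6\<close>, OF _ _ _ majorant_cert_6]) simp_all
  next
    assume "d = 7"
    with c_g_bounds_7 show ?thesis
      by (intro that[unfolded \<open>d = 7\<close>, OF _ _ _ majorant_cert_7]) simp_all
  qed
qed

lemma ii_jj_contraction:
  assumes "0 < d" "C < 1" "L < 1" "majorant_cert d C L 0 qys" "0 \<le> c" "c \<le> C"
  shows "(\<exists>!a. 0 < a \<and> a < 1 \<and> ii d c a = a) \<and>
      (\<exists>!b. 0 < b \<and> b < 1 \<and> jj d c b = b) \<and>
      (\<forall>x\<in>{0..1}. \<bar>deriv (ii d c) x\<bar> < 1 \<and> \<bar>deriv (jj d c) x\<bar> < 1) \<and>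
      (\<forall>a b. (0 < a \<and> a < 1 \<and> ii d c a = a) \<and> (0 < b \<and> b < 1 \<and> jj d c b = b) \<longrightarrow>
         (\<forall>x\<in>{0..1}. (\<lambda>n. (ii d c ^^ n) x) \<longlonglongrightarrow> a) \<and>
         (\<forall>x\<in>{0..1}. (\<lambda>n. (jj d c ^^ n) x) \<longlonglongrightarrow> b) \<and>
         (\<forall>x\<in>{0..1}. ii d c x > x \<longleftrightarrow> x \<in> {0..<a}) \<and>
         (\<forall>x\<in>{0..1}. jj d c x > x \<longleftrightarrow> x \<in> {0..<b}))"
proof -
  have "0 \<le> C" "1 + c \<in> {1..1 + C}" "1 \<in> {1..1 + C}"
    using assms by auto
  note conditions = ff_comp_contraction_conditions[OF \<open>0 < d\<close> \<open>0 \<le> C\<close> \<open>C < 1\<close> assms(4)]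
  note i = contraction_of_unit_interval[OF \<open>L < 1\<close> conditions[OF \<open>1 + c \<in> _\<close> \<open>1 \<in> _\<close> ii_def]]
  note j = contraction_of_unit_interval[OF \<open>L < 1\<close> conditions[OF \<open>1 \<in> _\<close> \<open>1 + c \<in> _\<close> jj_def]]
  show ?thesis
    using i j by auto
qed

theorem lemma6p3:
  fixes d :: nat
  assumes "2 \<le> d" and "d \<le> 7"
  shows "\<exists>cd :: real. 0 < c_g d \<and> c_g d < cd \<and>
    (\<forall>c. 0 \<le> c \<and> c < cd \<longrightarrow>
      (\<exists>!a. 0 < a \<and> a < 1 \<and> ii d c a = a) \<and>
      (\<exists>!b. 0 < b \<and> b < 1 \<and> jj d c b = b) \<and>
      (\<forall>x\<in>{0..1}. \<bar>deriv (ii d c) x\<bar> < 1 \<and> \<bar>deriv (jj d c) x\<bar> < 1) \<and>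
      (\<forall>a b. (0 < a \<and> a < 1 \<and> ii d c a = a) \<and> (0 < b \<and> b < 1 \<and> jj d c b = b) \<longrightarrow>
         (\<forall>x\<in>{0..1}. (\<lambda>n. (ii d c ^^ n) x) \<longlonglongrightarrow> a) \<and>
         (\<forall>x\<in>{0..1}. (\<lambda>n. (jj d c ^^ n) x) \<longlonglongrightarrow> b) \<and>
         (\<forall>x\<in>{0..1}. ii d c x > x \<longleftrightarrow> x \<in> {0..<a}) \<and>
         (\<forall>x\<in>{0..1}. jj d c x > x \<longleftrightarrow> x \<in> {0..<b})))"
proof -
  obtain C qys where "0 < c_g d" "c_g d < C" "C < 1" "majorant_cert d C (99/100) 0 qys"
    using c_g_bounds_and_majorant_cert assms .
  moreover have "0 < d"
    using assms by simp
  ultimately show ?thesis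
    using ii_jj_contraction[of d C "99/100" qys] by (intro exI[of _ C]) auto
qed

end
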